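(* Let $p\ge 3$. Then every $p$-uniform hypertree is $\mathbb{Z}_2\times\mathbb{Z}_2$-cordial.
   Context: A hypergraph $H=(V,E)$ has edges that are non-empty subsets of $V$; it is $p$-uniform if every edge has exactly $p$ vertices. A walk is a sequence $v_0,e_1,v_1,\dots,e_n,v_n$ with $v_i\in V$, $e_i\in E$ and $v_{i-1},v_i\in e_i$; a path is a walk with all $v_i$ distinct and all $e_i$ distinct; a cycle is a walk with at least two edges, all $e_i$ distinct, and all $v_i$ distinct except $v_0=v_n$. A hypergraph is connected if any two vertices are joined by a path. A hypertree is a finite connected hypergraph with no cycles and at least one edge. Let $A=\mathbb{Z}_2\times\mathbb{Z}_2$. For a labeling $c:V\to A$, write $v_c(a)=|c^{-1}(a)|$; $c$ is $A$-friendly if $|v_c(a)-v_c(b)|\le 1$ for all $a,b\in A$. It induces $c^*:E\to A$, $c^*(e)=\sum_{v\in e}c(v)$; write $e_{c^*}(a)=|(c^* )^{-1}(a)|$. $H$ is $A$-cordial if it admits an $A$-friendly labeling $c$ with $|e_{c^*}(a)-e_{c^*}(b)|\le 1$ for all $a,b\in A$. *)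

theory Defs
  imports Main "HOL-Library.Z2" "HOL-Library.Product_Plus"
begin

definition hypergraph :: "'a set \<Rightarrow> 'a set set \<Rightarrow> bool" where
  "hypergraph V E \<longleftrightarrow> (\<forall>e\<in>E. e \<noteq> {} \<and> e \<subseteq> V)"

definition uniform :: "nat \<Rightarrow> 'a set \<Rightarrow> 'a set set \<Rightarrow> bool" where
  "uniform p V E \<longleftrightarrow> (\<forall>e\<in>E. card e = p)"

definition walk :: "'a set \<Rightarrow> 'a set set \<Rightarrow> 'a list \<Rightarrow> 'a set list \<Rightarrow> bool" where
  "walk V E vs es \<longleftrightarrow> length vs = length es + 1 \<and> set vs \<subseteq> V \<and> set es \<subseteq> E \<and>
     (\<forall>i < length es. vs ! i \<in> es ! i \<and> vs ! (i+1) \<in> es ! i)"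

definition hpath :: "'a set \<Rightarrow> 'a set set \<Rightarrow> 'a list \<Rightarrow> 'a set list \<Rightarrow> bool" where
  "hpath V E vs es \<longleftrightarrow> walk V E vs es \<and> distinct vs \<and> distinct es"

definition hcycle :: "'a set \<Rightarrow> 'a set set \<Rightarrow> 'a list \<Rightarrow> 'a set list \<Rightarrow> bool" where
  "hcycle V E vs es \<longleftrightarrow> walk V E vs es \<and> length es \<ge> 2 \<and> distinct es \<and>
     distinct (tl vs) \<and> hd vs = last vs"

definition hconnected :: "'a set \<Rightarrow> 'a set set \<Rightarrow> bool" where
  "hconnected V E \<longleftrightarrow> (\<forall>u\<in>V. \<forall>v\<in>V. \<exists>vs es. hpath V E vs es \<and> hd vs = u \<and> last vs = v)"

definition hypertree :: "'a set \<Rightarrow> 'a set set \<Rightarrow> bool" where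
  "hypertree V E \<longleftrightarrow> finite V \<and> hypergraph V E \<and> hconnected V E \<and>
     (\<nexists>vs es. hcycle V E vs es) \<and> E \<noteq> {}"

type_synonym klein = "bit \<times> bit"

definition vcount :: "'a set \<Rightarrow> ('a \<Rightarrow> klein) \<Rightarrow> klein \<Rightarrow> nat" where
  "vcount V c a = card {v\<in>V. c v = a}"

definition ecount :: "'a set set \<Rightarrow> ('a \<Rightarrow> klein) \<Rightarrow> klein \<Rightarrow> nat" where
  "ecount E c a = card {e\<in>E. (\<Sum>v\<in>e. c v) = a}"

definition A_friendly :: "'a set \<Rightarrow> ('a \<Rightarrow> klein) \<Rightarrow> bool" where
  "A_friendly V c \<longleftrightarrow> (\<forall>a b. \<bar>int (vcount V c a) - int (vcount V c b)\<bar> \<le> 1)"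

definition A_cordial :: "'a set \<Rightarrow> 'a set set \<Rightarrow> bool" where
  "A_cordial V E \<longleftrightarrow> (\<exists>c. A_friendly V c \<and>
     (\<forall>a b. \<bar>int (ecount E c a) - int (ecount E c b)\<bar> \<le> 1))"

lemma "(1::bit) + 1 = 0" by simp
lemma "((1::bit),(0::bit)) + (1,1) = (0,1)" by simp

end

theory Submission
  imports Defs
begin

text \<open>Order the edges of the hypertree so that every edge meets the union of the earlier ones
  (together with a root vertex) in exactly one vertex, its attachment; the other \<open>q = p - 1\<close>
  vertices are fresh. Label greedily, keeping after each edge both the vertex labels and the edge
  labels balanced. Balance forces how many fresh vertices get each label, and only the parities of
  these numbers matter for the new edge label, which is thus the label of the attachment plus the
  sums of the old and the new vertex excess sets. Choosing the new excess set suitably makes the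
  new edge label avoid the edge labels already in excess, except when \<open>q \<equiv> 1 (mod 4)\<close> and the
  edge is the third of a block of four; then the first three edges of the block are labelled
  together, fixing the labels of the attachments of the later two edges in advance.\<close>

section \<open>The Klein four-group\<close>

lemma UNIV_klein: "(UNIV :: klein set) = {(0, 0), (0, 1), (1, 0), (1, 1)}"
proof -
  have "(UNIV :: bit set) = {0, 1}"
    by (auto intro: bit.exhaust)
  then show ?thesis
    by auto
qed

lemma finite_klein [simp]: "finite (A :: klein set)"
  by (rule finite_subset[OF subset_UNIV]) (simp add: UNIV_klein)

lemma card_UNIV_klein: "card (UNIV :: klein set) = 4"
  by (simp add: UNIV_klein)

lemma card_klein_le: "card (A :: klein set) \<le> 4"
  using card_mono[of UNIV A] by (simp add: card_UNIV_klein)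

lemma card_klein_eq_4_iff: "card (A :: klein set) = 4 \<longleftrightarrow> A = UNIV"
  by (metis card_UNIV_klein card_subset_eq finite_klein subset_UNIV)

lemma card_UNIV_minus_klein: "card (UNIV - {y :: klein}) = 3"
  by (simp add: card_UNIV_klein)

lemma exists_klein_notin: "card (A :: klein set) < 4 \<Longrightarrow> \<exists>y. y \<notin> A"
  by (metis UNIV_I card_klein_eq_4_iff less_irrefl subsetI subset_antisym subset_UNIV)

lemma exists_klein_notin3: "\<exists>y :: klein. y \<noteq> a \<and> y \<noteq> b \<and> y \<noteq> c"
proof -
  have "card {a, b, c} < 4"
    using card_insert_le_m1 by (simp add: card_insert_if)
  then show ?thesis
    using exists_klein_notin by blast
qed

lemma klein_add_self [simp]: "(x :: klein) + x = 0"
  by (cases x) (simp add: zero_prod_def)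

lemma klein_add_self_left [simp]: "(x :: klein) + (x + y) = y"
  by (simp flip: add.assoc)

lemma klein_eq_iff_add: "(x :: klein) = y \<longleftrightarrow> x + y = 0"
  by (metis add_0_right klein_add_self_left)

lemma sum_UNIV_klein: "\<Sum>(UNIV :: klein set) = 0"
  by (simp add: UNIV_klein zero_prod_def)

lemma sum_UNIV_minus_klein: "\<Sum>(UNIV - {y :: klein}) = y"
proof -
  have "y + \<Sum>(UNIV - {y}) = 0"
    using sum.remove[of UNIV y "\<lambda>x. x"] by (simp add: sum_UNIV_klein)
  then show ?thesis
    by (metis klein_eq_iff_add)
qed

section \<open>Attaching orders of hypertrees\<close>

lemma walk_snoc:
  assumes "walk V E vs es" "e \<in> E" "last vs \<in> e" "z \<in> e" "z \<in> V"
  shows "walk V E (vs @ [z]) (es @ [e])"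
proof -
  have len: "length vs = length es + 1"
    using assms(1) by (simp add: walk_def)
  then have "vs ! length es = last vs"
    by (cases vs rule: rev_cases) (auto simp: nth_append)
  then show ?thesis
    using assms len unfolding walk_def by (auto simp: nth_append less_Suc_eq)
qed

lemma walk_Cons:
  assumes "walk V E vs es" "e \<in> E" "hd vs \<in> e" "x \<in> e" "x \<in> V"
  shows "walk V E (x # vs) (e # es)"
proof -
  have len: "length vs = length es + 1"
    using assms(1) by (simp add: walk_def)
  then have "vs ! 0 = hd vs"
    by (cases vs) auto
  then show ?thesis
    using assms len unfolding walk_def by (auto simp: nth_Cons' less_Suc_eq_0_disj)
qed

lemma walk_last_in_closed:
  assumes "walk V E vs es" "hd vs \<in> S" "\<And>e. e \<in> E \<Longrightarrow> e \<inter> S \<noteq> {} \<Longrightarrow> e \<subseteq> S"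
  shows "last vs \<in> S"
proof -
  have len: "length vs = length es + 1"
    and steps: "\<And>i. i < length es \<Longrightarrow> vs ! i \<in> es ! i \<and> vs ! Suc i \<in> es ! i \<and> es ! i \<in> E"
    using assms(1) by (auto simp: walk_def)
  have "vs ! i \<in> S" if "i \<le> length es" for i
    using that
  proof (induction i)
    case 0
    then show ?case
      using assms(2) len by (cases vs) auto
  next
    case (Suc i)
    then show ?case
      using steps[of i] assms(3)[of "es ! i"] by auto
  qed
  moreover have "last vs = vs ! length es"
    using len by (cases vs rule: rev_cases) (auto simp: nth_append)
  ultimately show ?thesis
    by simp
qed

definition path_within :: "'a set \<Rightarrow> 'a set set \<Rightarrow> 'a set set \<Rightarrow> 'a set \<Rightarrow> 'a \<Rightarrow> 'a \<Rightarrow> bool" where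
  "path_within V E F S x y \<longleftrightarrow>
     (\<exists>vs es. hpath V E vs es \<and> hd vs = x \<and> last vs = y \<and> set vs \<subseteq> S \<and> set es \<subseteq> F)"

lemma path_within_refl: "x \<in> S \<Longrightarrow> x \<in> V \<Longrightarrow> path_within V E F S x x"
  unfolding path_within_def hpath_def walk_def
  by (rule exI[of _ "[x]"], rule exI[of _ "[]"]) simp

lemma path_within_edge:
  assumes "e \<in> F" "F \<subseteq> E" "x \<in> e" "y \<in> e" "x \<noteq> y" "x \<in> V" "y \<in> V" "x \<in> S" "y \<in> S"
  shows "path_within V E F S x y"
  unfolding path_within_def hpath_def walk_def
  by (rule exI[of _ "[x, y]"], rule exI[of _ "[e]"]) (use assms in auto)

lemma path_within_mono:
  "path_within V E F S x y \<Longrightarrow> F \<subseteq> F' \<Longrightarrow> S \<subseteq> S' \<Longrightarrow> path_within V E F' S' x y"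
  unfolding path_within_def by blast

lemma path_within_snoc:
  assumes "path_within V E F S x y" "e \<in> E" "e \<notin> F" "y \<in> e" "z \<in> e" "z \<notin> S" "z \<in> V"
  shows "path_within V E (insert e F) (insert z S) x z"
proof -
  obtain vs es where p: "hpath V E vs es" "hd vs = x" "last vs = y" "set vs \<subseteq> S" "set es \<subseteq> F"
    using assms(1) unfolding path_within_def by blast
  have "vs \<noteq> []"
    using p(1) by (auto simp: hpath_def walk_def)
  have "walk V E (vs @ [z]) (es @ [e])"
    using p(1,3) assms(2,4,5,7) by (intro walk_snoc) (auto simp: hpath_def)
  moreover have "distinct (vs @ [z])" "distinct (es @ [e])"
    using p(1,4,5) assms(3,6) by (auto simp: hpath_def)
  ultimately show ?thesis
    unfolding path_within_def hpath_def using p(2-5) \<open>vs \<noteq> []\<close>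
    by (intro exI[of _ "vs @ [z]"] exI[of _ "es @ [e]"]) auto
qed

lemma path_within_Cons:
  assumes "path_within V E F S y z" "e \<in> E" "e \<notin> F" "y \<in> e" "x \<in> e" "x \<notin> S" "x \<in> V"
  shows "path_within V E (insert e F) (insert x S) x z"
proof -
  obtain vs es where p: "hpath V E vs es" "hd vs = y" "last vs = z" "set vs \<subseteq> S" "set es \<subseteq> F"
    using assms(1) unfolding path_within_def by blast
  have "vs \<noteq> []"
    using p(1) by (auto simp: hpath_def walk_def)
  have "walk V E (x # vs) (e # es)"
    using p(1,2) assms(2,4,5,7) by (intro walk_Cons) (auto simp: hpath_def)
  moreover have "distinct (x # vs)" "distinct (e # es)"
    using p(1,4,5) assms(3,6) by (auto simp: hpath_def)
  ultimately show ?thesis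
    unfolding path_within_def hpath_def using p(2-5) \<open>vs \<noteq> []\<close>
    by (intro exI[of _ "x # vs"] exI[of _ "e # es"]) auto
qed

lemma hypertree_no_path_within_and_edge:
  assumes "hypertree V E" "path_within V E F S u v" "u \<noteq> v" "e \<in> E" "e \<notin> F" "u \<in> e" "v \<in> e"
  shows False
proof -
  obtain vs es where p: "hpath V E vs es" "hd vs = u" "last vs = v" "set es \<subseteq> F"
    using assms(2) unfolding path_within_def by blast
  have len: "length vs = length es + 1" and vsV: "set vs \<subseteq> V"
    using p(1) by (auto simp: hpath_def walk_def)
  obtain vs' where vs: "vs = u # vs'"
    using p(2) len by (cases vs) auto
  then have "u \<in> V"
    using vsV by simp
  then have "es \<noteq> []"
    using len p(3) assms(3) unfolding vs by (cases vs') auto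
  moreover have "walk V E (vs @ [u]) (es @ [e])"
    using p(1,3) assms(4,6,7) \<open>u \<in> V\<close> by (intro walk_snoc) (auto simp: hpath_def)
  moreover have "distinct (es @ [e])" "distinct (vs' @ [u])"
    using p(1,4) assms(5) unfolding vs hpath_def by auto
  ultimately have "hcycle V E (vs @ [u]) (es @ [e])"
    unfolding hcycle_def vs by (auto simp: Suc_le_eq)
  then show False
    using assms(1) unfolding hypertree_def by blast
qed

definition covered :: "'a \<Rightarrow> 'a set list \<Rightarrow> nat \<Rightarrow> 'a set" where
  "covered r es k = insert r (\<Union>(set (take k es)))"

definition attaching_order :: "'a set set \<Rightarrow> 'a \<Rightarrow> 'a set list \<Rightarrow> bool" where
  "attaching_order E r es \<longleftrightarrow> distinct es \<and> set es \<subseteq> E \<and>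
     (\<forall>k < length es. \<exists>a. es ! k \<inter> covered r es k = {a})"

lemma covered_append: "k \<le> length es \<Longrightarrow> covered r (es @ fs) k = covered r es k"
  by (simp add: covered_def)

lemma covered_length: "covered r es (length es) = insert r (\<Union>(set es))"
  by (simp add: covered_def)

lemma covered_subset: "hypergraph V E \<Longrightarrow> r \<in> V \<Longrightarrow> set es \<subseteq> E \<Longrightarrow> covered r es k \<subseteq> V"
  unfolding covered_def hypergraph_def using set_take_subset by fastforce

lemma attaching_order_snoc_iff:
  "attaching_order E r (es @ [e]) \<longleftrightarrow>
     attaching_order E r es \<and> e \<in> E \<and> e \<notin> set es \<and> (\<exists>a. e \<inter> covered r es (length es) = {a})"
  by (auto simp: attaching_order_def nth_append covered_append less_Suc_eq)

lemma path_within_covered: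
  assumes "hypergraph V E" "r \<in> V" "attaching_order E r es"
    and "x \<in> covered r es (length es)" "y \<in> covered r es (length es)"
  shows "path_within V E (set es) (covered r es (length es)) x y"
  using assms(3-5)
proof (induction es arbitrary: x y rule: rev_induct)
  case Nil
  then show ?case
    using assms(2) by (simp add: covered_def path_within_refl)
next
  case (snoc e es)
  let ?U = "covered r es (length es)"
  have order: "attaching_order E r es" and eE: "e \<in> E" and e_new: "e \<notin> set es"
    and "\<exists>a. e \<inter> ?U = {a}"
    using snoc.prems(1) by (simp_all add: attaching_order_snoc_iff)
  then obtain a where a: "a \<in> ?U" "a \<in> e"
    by blast
  have eV: "e \<subseteq> V"
    using assms(1) eE by (simp add: hypergraph_def)
  have IH: "path_within V E (set es) ?U x y" if "x \<in> ?U" "y \<in> ?U" for x y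
    using snoc.IH order that by blast
  have cov: "covered r (es @ [e]) (length (es @ [e])) = ?U \<union> e"
    using covered_length[of r "es @ [e]"] covered_length[of r es] by auto
  have xy: "x \<in> ?U \<union> e" "y \<in> ?U \<union> e"
    using snoc.prems(2,3) cov by auto
  have "path_within V E (insert e (set es)) (?U \<union> e) x y"
  proof (cases "x \<in> ?U"; cases "y \<in> ?U")
    assume "x \<in> ?U" "y \<in> ?U"
    then show ?thesis
      by (rule path_within_mono[OF IH]) auto
  next
    assume x: "x \<in> ?U" and y: "y \<notin> ?U"
    with xy eV have "y \<in> e" "y \<in> V"
      by auto
    with y have "path_within V E (insert e (set es)) (insert y ?U) x y"
      by (intro path_within_snoc[OF IH[OF x a(1)] eE e_new a(2)])
    then show ?thesis
      by (rule path_within_mono) (use \<open>y \<in> e\<close> in auto)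
  next
    assume x: "x \<notin> ?U" and y: "y \<in> ?U"
    with xy eV have "x \<in> e" "x \<in> V"
      by auto
    with x have "path_within V E (insert e (set es)) (insert x ?U) x y"
      by (intro path_within_Cons[OF IH[OF a(1) y] eE e_new a(2)])
    then show ?thesis
      by (rule path_within_mono) (use \<open>x \<in> e\<close> in auto)
  next
    assume "x \<notin> ?U" "y \<notin> ?U"
    with xy eV have "x \<in> e" "y \<in> e" "x \<in> V" "y \<in> V"
      by auto
    moreover have "insert e (set es) \<subseteq> E"
      using order eE by (simp add: attaching_order_def)
    ultimately show ?thesis
      using path_within_refl[of x "?U \<union> e" V] path_within_edge[of e "insert e (set es)" E x y]
      by (cases "x = y") auto
  qed
  then show ?case
    using cov by simp
qed

lemma hypertree_finite_edges: "hypertree V E \<Longrightarrow> finite E"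
  unfolding hypertree_def hypergraph_def by (meson Pow_iff finite_Pow_iff finite_subset subsetI)

lemma hypertree_walk:
  assumes "hypertree V E" "u \<in> V" "v \<in> V"
  obtains vs es where "walk V E vs es" "hd vs = u" "last vs = v"
  using assms unfolding hypertree_def hconnected_def hpath_def by blast

text \<open>Two covered vertices are joined by a path inside the order, so an edge outside it that
  met the covered vertices twice would close a cycle.\<close>

lemma attaching_order_extend:
  assumes "hypertree V E" "r \<in> V" "attaching_order E r es" "set es \<noteq> E"
  obtains e where "attaching_order E r (es @ [e])"
proof -
  let ?U = "covered r es (length es)"
  have hg: "hypergraph V E"
    using assms(1) by (simp add: hypertree_def)
  have "\<exists>e \<in> E - set es. e \<inter> ?U \<noteq> {}"
  proof (rule ccontr)
    assume none: "\<not> (\<exists>e \<in> E - set es. e \<inter> ?U \<noteq> {})"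
    then have closed: "e \<subseteq> ?U" if "e \<in> E" "e \<inter> ?U \<noteq> {}" for e
      using that by (auto simp: covered_length)
    obtain e0 where e0: "e0 \<in> E" "e0 \<notin> set es"
      using assms(3,4) by (auto simp: attaching_order_def)
    then obtain v where "v \<in> e0"
      using hg by (auto simp: hypergraph_def)
    then have "v \<in> V"
      using hg e0 by (auto simp: hypergraph_def)
    then obtain vs pes where "walk V E vs pes" "hd vs = r" "last vs = v"
      using hypertree_walk assms(1,2) by metis
    then have "v \<in> ?U"
      using walk_last_in_closed[of V E vs pes ?U] closed by (simp add: covered_def)
    then show False
      using none e0 \<open>v \<in> e0\<close> by blast
  qed
  then obtain e a where e: "e \<in> E" "e \<notin> set es" "a \<in> e" "a \<in> ?U"
    by blast
  have "e \<inter> ?U = {a}"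
  proof (rule ccontr)
    assume "e \<inter> ?U \<noteq> {a}"
    then obtain b where "b \<in> e" "b \<in> ?U" "b \<noteq> a"
      using e by blast
    then show False
      using hypertree_no_path_within_and_edge[OF assms(1) path_within_covered[OF hg assms(2,3)]] e
      by blast
  qed
  then show ?thesis
    using that assms(3) e by (auto simp: attaching_order_snoc_iff)
qed

lemma hypertree_attaching_order:
  assumes "hypertree V E" "r \<in> V"
  obtains es where "attaching_order E r es" "set es = E"
proof -
  have "\<exists>es. attaching_order E r es \<and> length es = n" if "n \<le> card E" for n
    using that
  proof (induction n)
    case 0
    then show ?case
      by (auto simp: attaching_order_def)
  next
    case (Suc n)
    then obtain es where es: "attaching_order E r es" "length es = n"
      by auto
    then have "card (set es) = n"
      by (simp add: attaching_order_def distinct_card)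
    then have "set es \<noteq> E"
      using Suc.prems by auto
    then show ?case
      using attaching_order_extend[OF assms es(1)] es(2) by (metis length_append_singleton)
  qed
  then obtain es where es: "attaching_order E r es" "length es = card E"
    by blast
  then have "set es = E"
    using hypertree_finite_edges[OF assms(1)]
    by (metis attaching_order_def card_subset_eq distinct_card)
  then show ?thesis
    using that es by blast
qed

lemma attaching_order_covers:
  assumes "hypertree V E" "r \<in> V" "attaching_order E r es" "set es = E"
  shows "covered r es (length es) = V"
proof
  show "covered r es (length es) \<subseteq> V"
    using assms covered_subset by (metis hypertree_def order_refl)
  show "V \<subseteq> covered r es (length es)"
  proof
    fix v
    assume "v \<in> V"
    then obtain vs pes where "walk V E vs pes" "hd vs = r" "last vs = v"
      using hypertree_walk assms(1,2) by metis
    then show "v \<in> covered r es (length es)"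
      using walk_last_in_closed[of V E vs pes "covered r es (length es)"] assms(4)
      by (auto simp: covered_length)
  qed
qed

section \<open>Balanced label counts\<close>

lemma vcount_empty [simp]: "vcount {} c x = 0"
  by (simp add: vcount_def)

lemma vcount_insert:
  assumes "finite S" "s \<notin> S"
  shows "vcount (insert s S) c x = vcount S c x + of_bool (c s = x)"
proof -
  have "{v \<in> insert s S. c v = x} = (if c s = x then insert s {v \<in> S. c v = x} else {v \<in> S. c v = x})"
    by auto
  then show ?thesis
    using assms by (simp add: vcount_def)
qed

lemma vcount_Un:
  assumes "finite A" "finite B" "A \<inter> B = {}"
  shows "vcount (A \<union> B) c x = vcount A c x + vcount B c x"
proof -
  have "{v \<in> A \<union> B. c v = x} = {v \<in> A. c v = x} \<union> {v \<in> B. c v = x}"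
    by blast
  then show ?thesis
    using assms by (simp add: vcount_def card_Un_disjoint disjoint_iff)
qed

lemma vcount_cong:
  assumes "\<And>v. v \<in> S \<Longrightarrow> c v = d v"
  shows "vcount S c = vcount S d"
proof
  fix x
  have "{v \<in> S. c v = x} = {v \<in> S. d v = x}"
    using assms by auto
  then show "vcount S c x = vcount S d x"
    by (simp add: vcount_def)
qed

lemma vcount_const: "vcount S (\<lambda>_. t) x = (if x = t then card S else 0)"
  unfolding vcount_def by auto

lemma sum_vcount: "finite S \<Longrightarrow> (\<Sum>x\<in>UNIV. vcount S c x) = card S"
  by (induction S rule: finite_induct) (simp_all add: vcount_insert sum.distrib)

lemma vcount_realizable:
  "finite S \<Longrightarrow> (\<Sum>x\<in>UNIV. M x) = card S \<Longrightarrow> \<exists>c. vcount S c = M"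
proof (induction S arbitrary: M rule: finite_induct)
  case empty
  then show ?case
    by (auto simp: fun_eq_iff)
next
  case (insert s S)
  then have "(\<Sum>x\<in>UNIV. M x) \<noteq> 0"
    by simp
  then obtain y where y: "M y > 0"
    using sum.not_neutral_contains_not_neutral by blast
  let ?M = "M(y := M y - 1)"
  have "(\<Sum>x\<in>UNIV. M x) = (\<Sum>x\<in>UNIV. ?M x) + 1"
    using y sum.remove[of UNIV y M] sum.remove[of UNIV y ?M] by simp
  then have "(\<Sum>x\<in>UNIV. ?M x) = card S"
    using insert by simp
  then obtain c where c: "vcount S c = ?M"
    using insert.IH by blast
  have "vcount S (c(s := y)) = vcount S c"
    using insert.hyps(2) by (intro vcount_cong) auto
  then have "vcount (insert s S) (c(s := y)) = M"
    using y c insert.hyps by (auto simp: vcount_insert fun_eq_iff)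
  then show ?case
    by blast
qed

lemma vcount_realizable_extending:
  assumes "finite B" "D \<subseteq> B" "\<And>x. vcount D d x \<le> M x" "(\<Sum>x\<in>UNIV. M x) = card B"
  obtains c where "\<And>v. v \<in> D \<Longrightarrow> c v = d v" "vcount B c = M"
proof -
  have fin: "finite D" "finite (B - D)"
    using assms(1,2) finite_subset by auto
  have "(\<Sum>x\<in>UNIV. M x - vcount D d x) = card B - card D"
    using assms(3,4) sum_subtractf_nat[of UNIV "vcount D d" M] sum_vcount[OF fin(1)] by simp
  also have "\<dots> = card (B - D)"
    using assms(2) fin(1) by (simp add: card_Diff_subset)
  finally obtain g where g: "vcount (B - D) g = (\<lambda>x. M x - vcount D d x)"
    using vcount_realizable[OF fin(2), of "\<lambda>x. M x - vcount D d x"] by auto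
  define c where "c v = (if v \<in> D then d v else g v)" for v
  have "vcount D c = vcount D d" "vcount (B - D) c = vcount (B - D) g"
    by (auto simp: c_def intro: vcount_cong)
  moreover have "vcount B c x = vcount D c x + vcount (B - D) c x" for x
    using fin vcount_Un[of D "B - D" c x] by (simp add: Un_absorb1[OF assms(2)])
  ultimately have "vcount B c = M"
    using g assms(3) by (simp add: fun_eq_iff)
  then show ?thesis
    using that[of c] by (simp add: c_def)
qed

text \<open>The \<open>n\<close>-fold sum \<open>x + \<dots> + x\<close>.\<close>

definition klein_scale :: "nat \<Rightarrow> klein \<Rightarrow> klein" where
  "klein_scale n x = (if odd n then x else 0)"

lemma klein_scale_add: "klein_scale (m + n) x = klein_scale m x + klein_scale n x"
  by (simp add: klein_scale_def)

lemma sum_klein_scale_vcount: "finite S \<Longrightarrow> sum c S = (\<Sum>x\<in>UNIV. klein_scale (vcount S c x) x)"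
proof (induction S rule: finite_induct)
  case empty
  then show ?case
    by (simp add: klein_scale_def)
next
  case (insert s S)
  have "klein_scale (of_bool (c s = x)) x = (if x = c s then x else 0)" for x
    by (auto simp: klein_scale_def)
  then have "(\<Sum>x\<in>UNIV. klein_scale (of_bool (c s = x)) x) = c s"
    by simp
  then show ?case
    using insert by (simp add: vcount_insert klein_scale_add sum.distrib add.commute)
qed

definition balanced_count :: "(klein \<Rightarrow> nat) \<Rightarrow> nat \<Rightarrow> klein set \<Rightarrow> bool" where
  "balanced_count f n H \<longleftrightarrow> card H = n mod 4 \<and> (\<forall>x. f x = n div 4 + of_bool (x \<in> H))"

lemma balanced_countD: "balanced_count f n H \<Longrightarrow> f x = n div 4 + of_bool (x \<in> H)"
  unfolding balanced_count_def by blast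

lemma balanced_count_abs_diff: "balanced_count f n H \<Longrightarrow> \<bar>int (f a) - int (f b)\<bar> \<le> 1"
  using balanced_countD[of f n H a] balanced_countD[of f n H b] by simp

definition add_excess :: "klein set \<Rightarrow> klein \<Rightarrow> klein set" where
  "add_excess H l = (if card H = 3 then {} else insert l H)"

lemma balanced_count_Suc:
  assumes "balanced_count f n H" "l \<notin> H"
  shows "balanced_count (\<lambda>x. f x + of_bool (l = x)) (Suc n) (add_excess H l)"
proof (cases "card H = 3")
  case True
  then have "n mod 4 = 3" "card (insert l H) = 4"
    using assms by (simp_all add: balanced_count_def)
  then have "Suc n div 4 = n div 4 + 1" "Suc n mod 4 = 0" "insert l H = UNIV"
    by (presburger, presburger, simp add: card_klein_eq_4_iff)
  then have "f x + of_bool (l = x) = Suc n div 4" for x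
    using assms balanced_countD[of f n H x] by auto
  then show ?thesis
    using True \<open>Suc n mod 4 = 0\<close> by (simp add: balanced_count_def add_excess_def)
next
  case False
  then have "n mod 4 < 3"
    using assms(1) card_klein_le[of H] by (auto simp: balanced_count_def)
  then have "Suc n div 4 = n div 4" "Suc n mod 4 = Suc (n mod 4)"
    by presburger+
  moreover have "f x + of_bool (l = x) = n div 4 + of_bool (x \<in> insert l H)" for x
    using assms balanced_countD[of f n H x] by auto
  ultimately show ?thesis
    using assms False by (simp add: balanced_count_def add_excess_def)
qed

text \<open>Extending a balanced count of \<open>n\<close> labels with excess \<open>H\<close> by \<open>q\<close> new labels to a balanced count
  with excess \<open>H'\<close> requires exactly \<open>fresh_count n q H H' x\<close> new labels equal to \<open>x\<close>.\<close>

definition fresh_count :: "nat \<Rightarrow> nat \<Rightarrow> klein set \<Rightarrow> klein set \<Rightarrow> klein \<Rightarrow> nat" where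
  "fresh_count n q H H' x = ((n + q) div 4 + of_bool (x \<in> H')) - (n div 4 + of_bool (x \<in> H))"

definition excess_compatible :: "nat \<Rightarrow> nat \<Rightarrow> klein set \<Rightarrow> klein set \<Rightarrow> bool" where
  "excess_compatible n q H H' \<longleftrightarrow> card H' = (n + q) mod 4 \<and> (4 \<le> n mod 4 + q \<or> H \<subseteq> H')"

lemma fresh_count_add:
  assumes "excess_compatible n q H H'"
  shows "n div 4 + of_bool (x \<in> H) + fresh_count n q H H' x = (n + q) div 4 + of_bool (x \<in> H')"
proof -
  have split: "(n + q) div 4 = n div 4 + (n mod 4 + q) div 4"
    by presburger
  have "n div 4 + of_bool (x \<in> H) \<le> (n + q) div 4 + of_bool (x \<in> H')"
    using assms by (cases "4 \<le> n mod 4 + q") (auto simp: excess_compatible_def split)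
  then show ?thesis
    by (simp add: fresh_count_def)
qed

lemma sum_fresh_count:
  assumes "card H = n mod 4" "excess_compatible n q H H'"
  shows "(\<Sum>x\<in>UNIV. fresh_count n q H H' x) = q"
proof -
  have sum_balanced: "(\<Sum>x\<in>UNIV. k + of_bool (x \<in> A)) = 4 * k + card A" for k and A :: "klein set"
    by (simp add: sum.distrib card_UNIV_klein)
  have "(\<Sum>x\<in>UNIV. n div 4 + of_bool (x \<in> H)) + (\<Sum>x\<in>UNIV. fresh_count n q H H' x)
      = (\<Sum>x\<in>UNIV. (n + q) div 4 + of_bool (x \<in> H'))"
    using fresh_count_add[OF assms(2)] by (simp flip: sum.distrib)
  then show ?thesis
    using assms by (simp add: sum_balanced excess_compatible_def)
qed

lemma sum_klein_scale_excess: "(\<Sum>x\<in>UNIV. klein_scale (k + of_bool (x \<in> H)) x) = \<Sum>H"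
proof -
  have "(\<Sum>x\<in>UNIV. klein_scale k x) = 0"
    by (cases "odd k") (simp_all add: klein_scale_def sum_UNIV_klein)
  moreover have "(\<Sum>x\<in>UNIV. klein_scale (of_bool (x \<in> H)) x) = \<Sum>H"
  proof -
    have "klein_scale (of_bool (x \<in> H)) x = (if x \<in> H then x else 0)" for x
      by (simp add: klein_scale_def)
    then show ?thesis
      using sum.inter_restrict[of UNIV "\<lambda>x. x" H] by simp
  qed
  ultimately show ?thesis
    by (simp add: klein_scale_add sum.distrib)
qed

lemma sum_klein_scale_fresh_count:
  assumes "excess_compatible n q H H'"
  shows "(\<Sum>x\<in>UNIV. klein_scale (fresh_count n q H H' x) x) = \<Sum>H + \<Sum>H'"
proof -
  have "klein_scale (fresh_count n q H H' x) x
      = klein_scale (n div 4 + of_bool (x \<in> H)) x + klein_scale ((n + q) div 4 + of_bool (x \<in> H')) x" for x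
    using arg_cong[OF fresh_count_add[OF assms, of x], of "\<lambda>m. klein_scale m x"]
    by (metis add.commute klein_add_self_left klein_scale_add)
  then show ?thesis
    by (simp add: sum.distrib sum_klein_scale_excess)
qed

text \<open>The excess \<open>H'\<close> after a step has \<open>(h + q) mod 4\<close> elements; these are the cases in which its
  sum can be chosen so that the new edge label avoids the \<open>g\<close> labels already in excess.\<close>

definition excess_choice_possible :: "nat \<Rightarrow> nat \<Rightarrow> nat \<Rightarrow> bool" where
  "excess_choice_possible h g q \<longleftrightarrow>
     (h + q) mod 4 = 1 \<or> (h + q) mod 4 = 2 \<and> g \<le> 2 \<or> (h + q) mod 4 = 3 \<and> g + h \<le> 3 \<or>
     (h + q) mod 4 = 0 \<and> g = 0"

lemma exists_excess_avoiding:
  fixes H HE :: "klein set"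
  assumes H: "card H = n mod 4" and HE: "card HE < 4" and q: "2 \<le> q"
    and possible: "excess_choice_possible (n mod 4) (card HE) q"
  obtains H' where "excess_compatible n q H H'" "t + \<Sum>H + \<Sum>H' \<notin> HE"
proof -
  let ?h = "n mod 4" and ?g = "card HE" and ?T = "(\<lambda>z. t + \<Sum>H + z) ` HE"
  have avoid: "t + \<Sum>H + y \<notin> HE" if "y \<notin> ?T" for y
    using that image_eqI[of y "\<lambda>z. t + \<Sum>H + z" "t + \<Sum>H + y" HE] by auto
  have card_T: "card ?T \<le> ?g"
    by (rule card_image_le) simp
  have mod_eq: "(n + q) mod 4 = (?h + q) mod 4"
    by (simp add: mod_add_left_eq)
  consider "(?h + q) mod 4 = 1" | "(?h + q) mod 4 = 2" "?g \<le> 2" | "(?h + q) mod 4 = 3" "?g + ?h \<le> 3"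
    | "(?h + q) mod 4 = 0" "?g = 0"
    using possible unfolding excess_choice_possible_def by auto
  then show thesis
  proof cases
    case 1
    obtain y where "y \<notin> ?T"
      using exists_klein_notin card_T HE by (meson le_less_trans)
    moreover have "4 \<le> ?h + q"
      using 1 q by presburger
    ultimately show thesis
      using that[of "{y}"] avoid 1 mod_eq by (simp add: excess_compatible_def)
  next
    case 2
    have "card (insert 0 ?T) < 4"
      using card_T 2 card_insert_le_m1[of 0 ?T] by (simp add: card_insert_if)
    then obtain y where y: "y \<notin> insert 0 ?T"
      using exists_klein_notin by blast
    have "4 \<le> ?h + q \<or> H = {}"
    proof (cases "4 \<le> ?h + q")
      case False
      with 2 q have "card H = 0"
        using H by presburger
      then show ?thesis
        by simp
    qed simp
    then show thesis
      using that[of "{0, y}"] avoid[of y] y 2 mod_eq by (auto simp: excess_compatible_def)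
  next
    case 3
    have "card (?T \<union> H) < 4"
      using card_Un_le[of ?T H] card_T 3 H by simp
    then obtain y where y: "y \<notin> ?T \<union> H"
      using exists_klein_notin by blast
    then show thesis
      using that[of "UNIV - {y}"] avoid[of y] 3 mod_eq
      by (auto simp: excess_compatible_def card_UNIV_minus_klein sum_UNIV_minus_klein)
  next
    case 4
    moreover have "4 \<le> ?h + q"
      using 4 q by presburger
    ultimately show thesis
      using that[of "{}"] mod_eq by (simp add: excess_compatible_def)
  qed
qed

lemma excess_choice_possible_mod4: "excess_choice_possible h g (q mod 4) = excess_choice_possible h g q"
  by (simp add: excess_choice_possible_def mod_add_right_eq)

lemma excess_choice_possible_after:
  assumes "\<not> (q mod 4 = 1 \<and> k mod 4 = 2)"
  shows "excess_choice_possible ((1 + k * q) mod 4) (k mod 4) q"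
proof -
  have "k mod 4 \<in> {0, 1, 2, 3}" "q mod 4 \<in> {0, 1, 2, 3}"
    by auto
  then have "excess_choice_possible ((1 + (k mod 4) * (q mod 4)) mod 4) (k mod 4) (q mod 4)"
    using assms unfolding excess_choice_possible_def by auto
  moreover have "(1 + (k mod 4) * (q mod 4)) mod 4 = (1 + k * q) mod 4"
    by (metis mod_add_right_eq mod_mult_eq)
  ultimately show ?thesis
    by (simp add: excess_choice_possible_mod4)
qed

lemma fresh_count_first_of_three:
  assumes "n mod 4 = 1" "q mod 4 = 1" "2 \<le> q" "u \<noteq> z"
  shows "1 + of_bool (x = u) \<le> fresh_count n q {z} {z, u} x"
proof -
  have "n div 4 + 1 \<le> (n + q) div 4"
    using assms(1-3) by presburger
  then show ?thesis
    using assms(4) by (auto simp: fresh_count_def)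
qed

lemma fresh_count_second_of_three:
  assumes "n mod 4 = 2" "2 \<le> q" "x \<noteq> w"
  shows "1 \<le> fresh_count n q H (UNIV - {w}) x"
proof -
  have "n div 4 + 1 \<le> (n + q) div 4"
    using assms(1,2) by presburger
  then show ?thesis
    using assms(3) by (auto simp: fresh_count_def)
qed

section \<open>Labelling along an attaching order\<close>

locale uniform_attaching_order =
  fixes V :: "'a set" and E :: "'a set set" and r :: 'a and es :: "'a set list" and q :: nat
  assumes hypergraph: "hypergraph V E" and root: "r \<in> V" and order: "attaching_order E r es"
    and finite_vertices: "finite V" and card_edge: "\<And>e. e \<in> set es \<Longrightarrow> card e = Suc q"
    and two_le_q: "2 \<le> q"
begin

abbreviation cov :: "nat \<Rightarrow> 'a set" where
  "cov \<equiv> covered r es"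

definition attach :: "nat \<Rightarrow> 'a" where
  "attach k = (THE a. es ! k \<inter> cov k = {a})"

definition fresh :: "nat \<Rightarrow> 'a set" where
  "fresh k = es ! k - cov k"

definition balanced_upto :: "nat \<Rightarrow> ('a \<Rightarrow> klein) \<Rightarrow> klein set \<Rightarrow> klein set \<Rightarrow> bool" where
  "balanced_upto k c H HE \<longleftrightarrow>
     balanced_count (vcount (cov k) c) (card (cov k)) H \<and>
     balanced_count (ecount (set (take k es)) c) k HE"

lemma finite_cov [simp]: "finite (cov k)"
  using covered_subset[OF hypergraph root] order finite_vertices
  by (meson attaching_order_def finite_subset)

lemma edge_inter_cov:
  assumes "k < length es"
  shows "es ! k \<inter> cov k = {attach k}"
proof -
  obtain a where a: "es ! k \<inter> cov k = {a}"
    using order assms by (auto simp: attaching_order_def)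
  then have "attach k = a"
    unfolding attach_def by (rule the_equality) (use a in blast)+
  then show ?thesis
    using a by simp
qed

lemma attach_in_cov: "k < length es \<Longrightarrow> attach k \<in> cov k"
  using edge_inter_cov by blast

lemma edge_eq_insert_fresh: "k < length es \<Longrightarrow> es ! k = insert (attach k) (fresh k)"
  using edge_inter_cov by (auto simp: fresh_def)

lemma fresh_disjoint_cov: "fresh k \<inter> cov k = {}"
  by (auto simp: fresh_def)

lemma attach_notin_fresh: "k < length es \<Longrightarrow> attach k \<notin> fresh k"
  using attach_in_cov fresh_disjoint_cov by blast

lemma finite_fresh [simp]: "k < length es \<Longrightarrow> finite (fresh k)"
  using hypergraph order finite_vertices
  by (metis attaching_order_def fresh_def finite_Diff finite_subset hypergraph_def nth_mem subsetD)

lemma card_fresh: "k < length es \<Longrightarrow> card (fresh k) = q"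
  using card_edge[of "es ! k"] edge_eq_insert_fresh[of k] nth_mem[of k es] attach_notin_fresh[of k]
  by simp

lemma cov_Suc: "k < length es \<Longrightarrow> cov (Suc k) = cov k \<union> fresh k"
  by (auto simp: covered_def fresh_def take_Suc_conv_app_nth)

lemma card_cov: "k \<le> length es \<Longrightarrow> card (cov k) = 1 + k * q"
proof (induction k)
  case 0
  then show ?case
    by (simp add: covered_def)
next
  case (Suc k)
  then show ?case
    using fresh_disjoint_cov[of k] card_fresh[of k]
    by (simp add: cov_Suc card_Un_disjoint Int_commute)
qed

lemma card_cov_Suc: "k < length es \<Longrightarrow> card (cov (Suc k)) = card (cov k) + q"
  using card_cov[of k] card_cov[of "Suc k"] by simp

lemma vcount_cov_Suc:
  assumes "k < length es" "\<And>v. v \<in> cov k \<Longrightarrow> c' v = c v"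
  shows "vcount (cov (Suc k)) c' x = vcount (cov k) c x + vcount (fresh k) c' x"
  using assms vcount_Un[of "cov k" "fresh k" c' x] vcount_cong[of "cov k" c' c] fresh_disjoint_cov[of k]
  by (simp add: cov_Suc Int_commute)

lemma ecount_take_Suc:
  assumes "k < length es" "\<And>v. v \<in> cov k \<Longrightarrow> c' v = c v"
  shows "ecount (set (take (Suc k) es)) c' x
       = ecount (set (take k es)) c x + of_bool (sum c' (es ! k) = x)"
proof -
  have new: "es ! k \<notin> set (take k es)"
    using order assms(1) by (auto simp: attaching_order_def in_set_conv_nth nth_eq_iff_index_eq)
  have "sum c' e = sum c e" if "e \<in> set (take k es)" for e
    using that assms(2) by (intro sum.cong) (auto simp: covered_def)
  then have "{e \<in> set (take (Suc k) es). sum c' e = x}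
      = (if sum c' (es ! k) = x then insert (es ! k) else id) {e \<in> set (take k es). sum c e = x}"
    using assms(1) by (auto simp: take_Suc_conv_app_nth)
  then show ?thesis
    using new by (simp add: ecount_def)
qed

lemma balanced_upto_Suc:
  assumes k: "k < length es" and bal: "balanced_upto k c H HE"
    and compat: "excess_compatible (card (cov k)) q H H'"
    and new_label: "c (attach k) + \<Sum>H + \<Sum>H' \<notin> HE"
    and D: "D \<subseteq> fresh k" "\<And>x. vcount D d x \<le> fresh_count (card (cov k)) q H H' x"
  obtains c' where "\<And>v. v \<in> cov k \<Longrightarrow> c' v = c v" "\<And>v. v \<in> D \<Longrightarrow> c' v = d v"
    "balanced_upto (Suc k) c' H' (add_excess HE (c (attach k) + \<Sum>H + \<Sum>H'))"
proof -
  let ?n = "card (cov k)" and ?l = "c (attach k) + \<Sum>H + \<Sum>H'"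
  have vbal: "balanced_count (vcount (cov k) c) ?n H"
    and ebal: "balanced_count (ecount (set (take k es)) c) k HE"
    using bal by (simp_all add: balanced_upto_def)
  have "(\<Sum>x\<in>UNIV. fresh_count ?n q H H' x) = card (fresh k)"
    using sum_fresh_count[OF _ compat] vbal card_fresh[OF k] by (simp add: balanced_count_def)
  then obtain f where f: "\<And>v. v \<in> D \<Longrightarrow> f v = d v" "vcount (fresh k) f = fresh_count ?n q H H'"
    using vcount_realizable_extending[OF finite_fresh[OF k] D] by blast
  define c' where "c' v = (if v \<in> fresh k then f v else c v)" for v
  have old: "c' v = c v" if "v \<in> cov k" for v
    using that fresh_disjoint_cov by (auto simp: c'_def)
  have prescribed: "c' v = d v" if "v \<in> D" for v
    using that D(1) f(1) by (auto simp: c'_def)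
  have fresh_labels: "vcount (fresh k) c' = fresh_count ?n q H H'"
    using f(2) vcount_cong[of "fresh k" c' f] by (simp add: c'_def)
  have "vcount (cov (Suc k)) c' x = card (cov (Suc k)) div 4 + of_bool (x \<in> H')" for x
    using vcount_cov_Suc[OF k old] balanced_countD[OF vbal] fresh_labels fresh_count_add[OF compat]
      card_cov_Suc[OF k] by simp
  then have vbal': "balanced_count (vcount (cov (Suc k)) c') (card (cov (Suc k))) H'"
    using compat card_cov_Suc[OF k] by (simp add: balanced_count_def excess_compatible_def)
  have "sum c' (es ! k) = c (attach k) + sum c' (fresh k)"
    using edge_eq_insert_fresh[OF k] attach_notin_fresh[OF k] attach_in_cov[OF k] finite_fresh[OF k] old
    by simp
  also have "sum c' (fresh k) = \<Sum>H + \<Sum>H'"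
    using sum_klein_scale_vcount[OF finite_fresh[OF k]] fresh_labels sum_klein_scale_fresh_count[OF compat]
    by simp
  finally have "ecount (set (take (Suc k) es)) c' = (\<lambda>x. ecount (set (take k es)) c x + of_bool (?l = x))"
    using ecount_take_Suc[OF k old] by (simp add: fun_eq_iff add.assoc)
  then have "balanced_count (ecount (set (take (Suc k) es)) c') (Suc k) (add_excess HE ?l)"
    using balanced_count_Suc[OF ebal new_label] by simp
  with vbal' show thesis
    using that[of c'] old prescribed by (simp add: balanced_upto_def)
qed

lemma balanced_upto_0: "balanced_upto 0 (\<lambda>_. 0) {0} {}"
  by (simp add: balanced_upto_def balanced_count_def covered_def vcount_def ecount_def)

lemma balanced_upto_Suc_single:
  assumes k: "k < length es" and bal: "balanced_upto k c H HE" and "\<not> (q mod 4 = 1 \<and> k mod 4 = 2)"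
  obtains c' H' HE' where "balanced_upto (Suc k) c' H' HE'"
proof -
  have H: "card H = card (cov k) mod 4" and HE: "card HE = k mod 4"
    using bal by (simp_all add: balanced_upto_def balanced_count_def)
  have "excess_choice_possible (card (cov k) mod 4) (card HE) q"
    using excess_choice_possible_after[OF assms(3)] card_cov[of k] k HE by simp
  then obtain H' where compat: "excess_compatible (card (cov k)) q H H'"
    and label: "c (attach k) + \<Sum>H + \<Sum>H' \<notin> HE"
    using exists_excess_avoiding[OF H _ two_le_q] HE by (metis mod_less_divisor zero_less_numeral)
  obtain c' where "balanced_upto (Suc k) c' H' (add_excess HE (c (attach k) + \<Sum>H + \<Sum>H'))"
    using balanced_upto_Suc[OF k bal compat label, of "{}" c] by auto
  then show thesis
    using that by blast
qed

lemma triple_first: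
  assumes k: "k < length es" and bal: "balanced_upto k c {z} {}"
    and n: "card (cov k) mod 4 = 1" and q: "q mod 4 = 1" and uz: "u \<noteq> z"
    and D: "D \<subseteq> fresh k" "card D \<le> 1 \<or> t = u \<and> card D \<le> 2"
  obtains c1 where "\<And>v. v \<in> cov k \<Longrightarrow> c1 v = c v" "\<And>v. v \<in> D \<Longrightarrow> c1 v = t"
    "balanced_upto (Suc k) c1 {z, u} {c (attach k) + u}"
proof -
  have compat: "excess_compatible (card (cov k)) q {z} {z, u}"
    using n q uz by (simp add: excess_compatible_def mod_add_eq[symmetric])
  have "vcount D (\<lambda>_. t) x \<le> fresh_count (card (cov k)) q {z} {z, u} x" for x
    using fresh_count_first_of_three[OF n q two_le_q uz, of x] D(2) by (auto simp: vcount_const)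
  then obtain c1 where c1: "\<And>v. v \<in> cov k \<Longrightarrow> c1 v = c v" "\<And>v. v \<in> D \<Longrightarrow> c1 v = t"
    "balanced_upto (Suc k) c1 {z, u} (add_excess {} (c (attach k) + \<Sum>{z} + \<Sum>{z, u}))"
    using balanced_upto_Suc[OF k bal compat _ D(1)] by blast
  then show thesis
    using that[of c1] uz by (simp add: add_excess_def add.assoc)
qed

lemma triple_second:
  assumes k: "k < length es" and bal: "balanced_upto k c {z, u} {l}"
    and n: "card (cov k) mod 4 = 2" and q: "q mod 4 = 1" and uz: "u \<noteq> z"
    and D: "D \<subseteq> fresh k" "card D \<le> 1" "D \<noteq> {} \<Longrightarrow> t \<noteq> w"
    and label: "c (attach k) + z + u + w \<noteq> l"
  obtains c2 where "\<And>v. v \<in> cov k \<Longrightarrow> c2 v = c v" "\<And>v. v \<in> D \<Longrightarrow> c2 v = t"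
    "balanced_upto (Suc k) c2 (UNIV - {w}) {c (attach k) + z + u + w, l}"
proof -
  have compat: "excess_compatible (card (cov k)) q {z, u} (UNIV - {w})"
    using n q two_le_q by (simp add: excess_compatible_def card_UNIV_minus_klein mod_add_eq[symmetric])
  have sum: "c (attach k) + \<Sum>{z, u} + \<Sum>(UNIV - {w}) = c (attach k) + z + u + w"
    using uz by (simp add: sum_UNIV_minus_klein add.assoc)
  have new_label: "c (attach k) + \<Sum>{z, u} + \<Sum>(UNIV - {w}) \<notin> {l}"
    unfolding sum using label by simp
  have "vcount D (\<lambda>_. t) x \<le> fresh_count (card (cov k)) q {z, u} (UNIV - {w}) x" for x
    using fresh_count_second_of_three[OF n two_le_q, of t w "{z, u}"] D(2,3)
    by (cases "D = {}") (auto simp: vcount_const)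
  then obtain c2 where c2: "\<And>v. v \<in> cov k \<Longrightarrow> c2 v = c v" "\<And>v. v \<in> D \<Longrightarrow> c2 v = t"
    "balanced_upto (Suc k) c2 (UNIV - {w})
       (add_excess {l} (c (attach k) + \<Sum>{z, u} + \<Sum>(UNIV - {w})))"
    using balanced_upto_Suc[OF k bal compat new_label D(1)] by blast
  then show thesis
    using that[of c2] by (simp add: sum add_excess_def)
qed

lemma triple_third:
  assumes k: "k < length es" and bal: "balanced_upto k c (UNIV - {w}) {l2, l1}"
    and n: "card (cov k) mod 4 = 3" and q: "q mod 4 = 1"
    and label: "c (attach k) + w \<notin> {l2, l1}"
  obtains c3 H HE where "balanced_upto (Suc k) c3 H HE"
proof -
  have compat: "excess_compatible (card (cov k)) q (UNIV - {w}) {}"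
    using n q two_le_q by (simp add: excess_compatible_def mod_add_eq[symmetric])
  have "c (attach k) + \<Sum>(UNIV - {w}) + \<Sum>{} \<notin> {l2, l1}"
    using label by (simp add: sum_UNIV_minus_klein)
  then obtain c3 where "balanced_upto (Suc k) c3 {} (add_excess {l2, l1} (c (attach k) + \<Sum>(UNIV - {w})))"
    using balanced_upto_Suc[OF k bal compat, of "{}" c] by auto
  then show thesis
    using that by blast
qed

lemma triple_last_two:
  assumes k: "Suc (Suc k) < length es" and bal: "balanced_upto (Suc k) c1 {z, u} {s + u}"
    and n: "card (cov (Suc k)) mod 4 = 2" and q: "q mod 4 = 1" and uz: "u \<noteq> z"
    and old: "attach (Suc (Suc k)) \<in> cov (Suc k) \<Longrightarrow> t = c1 (attach (Suc (Suc k)))"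
    and new: "attach (Suc (Suc k)) \<notin> cov (Suc k) \<Longrightarrow> t \<noteq> w"
    and distinct: "w \<noteq> s + c1 (attach (Suc k)) + z" "w \<noteq> s + t + u" "u \<noteq> c1 (attach (Suc k)) + t + z"
  obtains c' H HE where "balanced_upto (k + 3) c' H HE"
proof -
  let ?a = "attach (Suc (Suc k))" and ?l2 = "c1 (attach (Suc k)) + z + u + w"
  let ?D = "{?a} - cov (Suc k)"
  have k1: "Suc k < length es"
    using k by simp
  have D: "?D \<subseteq> fresh (Suc k)" "card ?D \<le> 1" "?D \<noteq> {} \<Longrightarrow> t \<noteq> w"
    using attach_in_cov[OF k] cov_Suc[OF k1] new by (auto simp: card_le_Suc0_iff_eq)
  have label2: "?l2 \<noteq> s + u"
    using distinct(1) by (simp add: klein_eq_iff_add[of _ "_ + _"] add_ac)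
  obtain c2 where c2: "\<And>v. v \<in> cov (Suc k) \<Longrightarrow> c2 v = c1 v" "\<And>v. v \<in> ?D \<Longrightarrow> c2 v = t"
    "balanced_upto (Suc (Suc k)) c2 (UNIV - {w}) {?l2, s + u}"
    using triple_second[OF k1 bal n q uz D label2] by blast
  have "c2 ?a = t"
    using c2(1,2) old by (cases "?a \<in> cov (Suc k)") auto
  then have label3: "c2 ?a + w \<notin> {?l2, s + u}"
    using distinct(2,3) by (simp add: klein_eq_iff_add[of _ "_ + _"] add_ac)
  have "card (cov (Suc (Suc k))) mod 4 = 3"
    using n q card_cov_Suc[OF k1] by presburger
  then obtain c3 H HE where "balanced_upto (Suc (Suc (Suc k))) c3 H HE"
    using triple_third[OF k c2(3) _ q label3] by blast
  then show thesis
    using that by (simp add: numeral_3_eq_3)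
qed

text \<open>Those of \<open>a\<close> and \<open>b\<close> that are fresh get labels making \<open>c1 a + c1 b = 0\<close>; if both are old,
  \<open>u\<close> is chosen to avoid \<open>c a + c b + z\<close> instead.\<close>

lemma triple_first_cancelling:
  assumes k: "k < length es" and bal: "balanced_upto k c {z} {}"
    and n: "card (cov k) mod 4 = 1" and q: "q mod 4 = 1"
    and ab: "a \<in> cov (Suc k)" "b \<in> cov (Suc k)"
  obtains u c1 where "u \<noteq> z" "balanced_upto (Suc k) c1 {z, u} {c (attach k) + u}"
    "u \<noteq> c1 a + c1 b + z"
proof -
  obtain u where u: "u \<noteq> z" "u \<noteq> c a + c b + z"
    using exists_klein_notin3 by blast
  define t where "t = (if a \<in> cov k then c a else if b \<in> cov k then c b else u)"
  let ?D = "{a, b} - cov k"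
  have "card ?D \<le> 1 \<or> t = u \<and> card ?D \<le> 2"
  proof (cases "a \<in> cov k \<or> b \<in> cov k")
    case True
    then have "?D \<subseteq> {a} \<or> ?D \<subseteq> {b}"
      by auto
    then show ?thesis
      using card_mono[of "{a}" ?D] card_mono[of "{b}" ?D] by auto
  next
    case False
    then have "?D = {a, b}"
      by auto
    then show ?thesis
      using False by (simp add: t_def card_insert_if)
  qed
  moreover have "?D \<subseteq> fresh k"
    using ab cov_Suc[OF k] by auto
  ultimately obtain c1 where c1: "\<And>v. v \<in> cov k \<Longrightarrow> c1 v = c v" "\<And>v. v \<in> ?D \<Longrightarrow> c1 v = t"
    "balanced_upto (Suc k) c1 {z, u} {c (attach k) + u}"
    using triple_first[OF k bal n q u(1)] by blast
  moreover have "u \<noteq> c1 a + c1 b + z"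
    using u c1(1,2) by (cases "a \<in> cov k"; cases "b \<in> cov k") (auto simp: t_def)
  ultimately show thesis
    using that u(1) by blast
qed

lemma balanced_upto_add3:
  assumes k: "k + 3 \<le> length es" and bal: "balanced_upto k c H HE"
    and k4: "k mod 4 = 0" and q: "q mod 4 = 1"
  obtains c' H' HE' where "balanced_upto (k + 3) c' H' HE'"
proof -
  let ?s = "c (attach k)" and ?a2 = "attach (Suc k)" and ?a3 = "attach (Suc (Suc k))"
  have k0: "k < length es" and k2: "Suc (Suc k) < length es"
    using k by auto
  obtain m where "k = 4 * m"
    using k4 by (metis mod_eq_0_iff_dvd dvd_def)
  then have "card (cov k) = 1 + 4 * (m * q)"
    using card_cov[of k] k0 by (simp add: mult.assoc)
  then have n: "card (cov k) mod 4 = 1"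
    by presburger
  then have n1: "card (cov (Suc k)) mod 4 = 2"
    using q card_cov_Suc[OF k0] by presburger
  have "card H = 1" "card HE = 0"
    using bal n k4 by (simp_all add: balanced_upto_def balanced_count_def)
  then obtain z where "H = {z}" "HE = {}"
    by (auto simp: card_1_singleton_iff)
  with bal have bal0: "balanced_upto k c {z} {}"
    by simp
  show thesis
  proof (cases "?a3 \<in> cov (Suc k)")
    case True
    moreover have "?a2 \<in> cov (Suc k)"
      using attach_in_cov k2 by simp
    ultimately obtain u c1 where u: "u \<noteq> z" "u \<noteq> c1 ?a2 + c1 ?a3 + z"
      and c1: "balanced_upto (Suc k) c1 {z, u} {?s + u}"
      using triple_first_cancelling[OF k0 bal0 n q] by metis
    obtain w where "w \<noteq> ?s + c1 ?a2 + z" "w \<noteq> ?s + c1 ?a3 + u"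
      using exists_klein_notin3 by blast
    then show thesis
      using triple_last_two[OF k2 c1 n1 q u(1), of "c1 ?a3" w] True u(2) that by blast
  next
    case False
    obtain u where u: "u \<noteq> z"
      using exists_klein_notin3 by blast
    obtain c1 where c1: "balanced_upto (Suc k) c1 {z, u} {?s + u}"
      using triple_first[OF k0 bal0 n q u, of "{}"] by auto
    obtain w where w: "w \<noteq> ?s + c1 ?a2 + z"
      using exists_klein_notin3 by blast
    obtain t where t: "t \<noteq> w" "t \<noteq> ?s + u + w" "t \<noteq> c1 ?a2 + z + u"
      using exists_klein_notin3 by blast
    then have "w \<noteq> ?s + t + u" "u \<noteq> c1 ?a2 + t + z"
      by (simp_all add: klein_eq_iff_add[of _ "_ + _"] add_ac)
    then show thesis
      using triple_last_two[OF k2 c1 n1 q u, of t w] False t(1) w that by blast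
  qed
qed

lemma balanced_upto_exists: "k \<le> length es \<Longrightarrow> \<exists>c H HE. balanced_upto k c H HE"
proof (induction k rule: less_induct)
  case (less k)
  show ?case
  proof (cases k)
    case 0
    then show ?thesis
      using balanced_upto_0 by blast
  next
    case (Suc k')
    show ?thesis
    proof (cases "q mod 4 = 1 \<and> k' mod 4 = 2")
      case True
      then have k3: "k = (k - 3) + 3" "(k - 3) mod 4 = 0"
        using Suc by presburger+
      then obtain c H HE where "balanced_upto (k - 3) c H HE"
        using less.IH[of "k - 3"] less.prems Suc by auto
      then show ?thesis
        using balanced_upto_add3[of "k - 3"] less.prems k3 True by metis
    next
      case False
      obtain c H HE where "balanced_upto k' c H HE"
        using less.IH[of k'] less.prems Suc by auto
      then show ?thesis
        using balanced_upto_Suc_single[of k'] False less.prems Suc by (metis Suc_le_eq)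
    qed
  qed
qed

lemma A_cordial_cover: "A_cordial (cov (length es)) (set es)"
proof -
  obtain c H HE where "balanced_upto (length es) c H HE"
    using balanced_upto_exists by blast
  then have "balanced_count (vcount (cov (length es)) c) (card (cov (length es))) H"
    "balanced_count (ecount (set es) c) (length es) HE"
    by (simp_all add: balanced_upto_def)
  then show ?thesis
    unfolding A_cordial_def A_friendly_def by (blast intro: balanced_count_abs_diff)
qed

end

theorem theorem3:
  fixes V :: "'a set" and E :: "'a set set" and p :: nat
  assumes "p \<ge> 3"
    and "hypertree V E"
    and "uniform p V E"
  shows "A_cordial V E"
proof -
  have hg: "hypergraph V E" and fin: "finite V" and "E \<noteq> {}"
    using assms(2) by (simp_all add: hypertree_def)
  then obtain r where r: "r \<in> V"
    by (auto simp: hypergraph_def)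
  obtain es where es: "attaching_order E r es" "set es = E"
    using hypertree_attaching_order[OF assms(2) r] by blast
  interpret uniform_attaching_order V E r es "p - 1"
    using hg r es fin assms(1,3) by unfold_locales (auto simp: uniform_def)
  show ?thesis
    using A_cordial_cover attaching_order_covers[OF assms(2) r es] es(2) by simp
qed

end
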